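(* Fix $M>0$ and let $\mathcal{A}$ be the class of functions $m\in W^{1,2}(0,1)$ with $\int_0^1e^{m}\,dx=M$. Then for every sufficiently small $\delta>0$ and every continuous function $h_\delta:[0,\infty)\to\mathbb{R}$, the inequality $$\int_0^1e^{2m}\,dx<\delta M^2\int_0^1|m_x|^2\,dx+h_\delta\Big(\int_0^1e^m\,dx\Big)$$ does not hold for all $m\in\mathcal{A}$. *)

theory Defs
  imports "HOL-Analysis.Analysis"
begin

definition test_fun_01 :: "(real \<Rightarrow> real) \<Rightarrow> bool" where
  "test_fun_01 \<phi> \<longleftrightarrow>
     (\<forall>n x. ((deriv ^^ n) \<phi>) differentiable (at x)) \<and>
     (\<exists>a b. 0 < a \<and> a \<le> b \<and> b < 1 \<and> (\<forall>x. x \<notin> {a..b} \<longrightarrow> \<phi> x = 0))"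

definition W12_01 :: "(real \<Rightarrow> real) \<Rightarrow> (real \<Rightarrow> real) \<Rightarrow> bool" where
  "W12_01 m g \<longleftrightarrow>
     set_borel_measurable lborel {0<..<1} m \<and>
     set_borel_measurable lborel {0<..<1} g \<and>
     set_integrable lborel {0<..<1} (\<lambda>x. (m x)\<^sup>2) \<and>
     set_integrable lborel {0<..<1} (\<lambda>x. (g x)\<^sup>2) \<and>
     (\<forall>\<phi>. test_fun_01 \<phi> \<longrightarrow>
        (LINT x:{0<..<1}|lborel. m x * deriv \<phi> x) = - (LINT x:{0<..<1}|lborel. g x * \<phi> x))"

end

theory Submission
  imports Defs
begin

text \<open>The functions \<open>m\<^sub>\<epsilon> x = ln (M \<epsilon> (1 + \<epsilon>)) - 2 ln (x + \<epsilon>)\<close>, i.e.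
  \<open>e\<^bsup>m\<^sub>\<epsilon>\<^esup> = M \<epsilon> (1 + \<epsilon>) / (x + \<epsilon>)\<^sup>2\<close>, all have mass \<open>M\<close> but concentrate at \<open>x = 0\<close>
  as \<open>\<epsilon> \<rightarrow> 0\<close>: \<open>\<integral> e\<^bsup>2 m\<^sub>\<epsilon>\<^esup> \<ge> M\<^sup>2 / (3 \<epsilon>) - M\<^sup>2 / 3\<close> while \<open>\<integral> \<bar>m\<^sub>\<epsilon>'\<bar>\<^sup>2 \<le> 4 / \<epsilon>\<close>.
  So for small \<open>\<delta>\<close> the left-hand side outgrows \<open>\<delta> M\<^sup>2 \<integral> \<bar>m\<^sub>\<epsilon>'\<bar>\<^sup>2\<close> by a multiple of
  \<open>1/\<epsilon>\<close>, whereas \<open>h\<^sub>\<delta>\<close>, evaluated at the fixed mass, only contributes the constant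
  \<open>h\<^sub>\<delta> M\<close>.\<close>

lemma set_integrable_Ioo_continuous:
  fixes f :: "real \<Rightarrow> real"
  assumes "continuous_on {a..b} f"
  shows "set_integrable lborel {a<..<b} f"
  by (rule set_integrable_subset[OF borel_integrable_atLeastAtMost'[OF assms]]) auto

lemma set_integral_Ioo_FTC:
  fixes f F :: "real \<Rightarrow> real"
  assumes "a \<le> b" and "continuous_on {a..b} f"
    and "\<And>x. a \<le> x \<Longrightarrow> x \<le> b \<Longrightarrow> (F has_real_derivative f x) (at x)"
  shows "(LINT x:{a<..<b}|lborel. f x) = F b - F a"
proof -
  have "interval_lebesgue_integral lborel (ereal a) (ereal b) f = F b - F a"
    using interval_integral_FTC_finite[of a b f F] assms
    by (auto simp: has_real_derivative_iff_has_vector_derivative intro: has_vector_derivative_at_within)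
  then show ?thesis
    using assms(1) by (simp add: interval_lebesgue_integral_def)
qed

lemma has_real_derivative_inverse_power_shift:
  fixes c e x :: real
  assumes "0 < x + e"
  shows "((\<lambda>x. - c / (real n + 1) * inverse ((x + e) ^ (n + 1))) has_real_derivative
           c / (x + e) ^ (n + 2)) (at x)"
proof -
  have D: "((\<lambda>x. (x + e) ^ (n + 1)) has_real_derivative (real n + 1) * (x + e) ^ n) (at x)"
    by (auto intro!: derivative_eq_intros) (cases n; simp add: algebra_simps)
  have eq: "- c / (real n + 1) * - ((real n + 1) * y ^ n * inverse ((y ^ (n + 1)) ^ Suc (Suc 0)))
      = c / y ^ (n + 2)" if "0 < y" for y :: real
  proof -
    have "(y ^ (n + 1)) ^ Suc (Suc 0) = y ^ n * y ^ (n + 2)"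
      by (simp flip: power_add power_mult)
    moreover have "0 < y ^ n" "0 < real n + 1"
      using that by auto
    ultimately show ?thesis
      by (simp add: divide_simps del: power_Suc)
  qed
  show ?thesis
    by (rule DERIV_cong[OF DERIV_cmult[OF DERIV_inverse_fun[OF D]] eq]) (use assms in simp_all)
qed

lemma set_integral_inverse_power_shift:
  fixes a b c e :: real and n :: nat
  assumes "a \<le> b" and "0 < a + e"
  shows "(LINT x:{a<..<b}|lborel. c / (x + e) ^ (n + 2))
           = c / (real n + 1) * (1 / (a + e) ^ (n + 1) - 1 / (b + e) ^ (n + 1))"
proof -
  have pos: "0 < x + e" if "a \<le> x" for x
    using that assms(2) by linarith
  have "(LINT x:{a<..<b}|lborel. c / (x + e) ^ (n + 2))
          = - c / (real n + 1) * inverse ((b + e) ^ (n + 1)) - - c / (real n + 1) * inverse ((a + e) ^ (n + 1))"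
    using assms(1)
    by (intro set_integral_Ioo_FTC has_real_derivative_inverse_power_shift pos continuous_intros)
      (use pos in fastforce)+
  then show ?thesis
    by (simp add: algebra_simps inverse_eq_divide)
qed

lemma W12_01_of_C1:
  fixes m g :: "real \<Rightarrow> real"
  assumes deriv_m: "\<And>x. 0 \<le> x \<Longrightarrow> x \<le> 1 \<Longrightarrow> (m has_real_derivative g x) (at x)"
    and cont_g: "continuous_on {0..1} g"
  shows "W12_01 m g"
  unfolding W12_01_def
proof (intro conjI allI impI)
  have cont_m: "continuous_on {0..1} m"
    using deriv_m by (meson DERIV_isCont atLeastAtMost_iff continuous_at_imp_continuous_on)
  show "set_borel_measurable lborel {0<..<1} m" "set_borel_measurable lborel {0<..<1} g"
    using set_integrable_Ioo_continuous[OF cont_m] set_integrable_Ioo_continuous[OF cont_g]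
    unfolding set_integrable_def set_borel_measurable_def
    by (auto intro: borel_measurable_integrable)
  show "set_integrable lborel {0<..<1} (\<lambda>x. (m x)\<^sup>2)" "set_integrable lborel {0<..<1} (\<lambda>x. (g x)\<^sup>2)"
    by (intro set_integrable_Ioo_continuous continuous_intros cont_m cont_g)+
  fix \<phi> :: "real \<Rightarrow> real"
  assume test: "test_fun_01 \<phi>"
  then have diff: "\<phi> differentiable (at x)" and diff': "deriv \<phi> differentiable (at x)" for x
    unfolding test_fun_01_def by (metis funpow_0, metis funpow_0 funpow_Suc_right o_apply)
  from test have "\<phi> 0 = 0" "\<phi> 1 = 0"
    unfolding test_fun_01_def by auto
  have cont_\<phi>: "continuous_on {0..1} \<phi>" and cont_\<phi>': "continuous_on {0..1} (deriv \<phi>)"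
    using diff diff' by (meson continuous_at_imp_continuous_on differentiable_imp_continuous_within)+
  have "(LINT x:{0<..<1}|lborel. g x * \<phi> x + m x * deriv \<phi> x) = m 1 * \<phi> 1 - m 0 * \<phi> 0"
  proof (rule set_integral_Ioo_FTC)
    show "continuous_on {0..1} (\<lambda>x. g x * \<phi> x + m x * deriv \<phi> x)"
      by (intro continuous_intros cont_m cont_g cont_\<phi> cont_\<phi>')
    fix x :: real assume "0 \<le> x" "x \<le> 1"
    then show "((\<lambda>x. m x * \<phi> x) has_real_derivative g x * \<phi> x + m x * deriv \<phi> x) (at x)"
      using DERIV_mult[OF deriv_m DERIV_deriv_iff_real_differentiable[THEN iffD2, OF diff]]
      by (simp add: algebra_simps)
  qed simp
  also have "\<dots> = 0"
    using \<open>\<phi> 0 = 0\<close> \<open>\<phi> 1 = 0\<close> by simp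
  also have "(LINT x:{0<..<1}|lborel. g x * \<phi> x + m x * deriv \<phi> x)
      = (LINT x:{0<..<1}|lborel. g x * \<phi> x) + (LINT x:{0<..<1}|lborel. m x * deriv \<phi> x)"
    by (intro set_integral_add set_integrable_Ioo_continuous continuous_intros
        cont_m cont_g cont_\<phi> cont_\<phi>')
  finally show "(LINT x:{0<..<1}|lborel. m x * deriv \<phi> x) = - (LINT x:{0<..<1}|lborel. g x * \<phi> x)"
    by linarith
qed

definition concentrating_profile :: "real \<Rightarrow> real \<Rightarrow> real \<Rightarrow> real" where
  "concentrating_profile M \<epsilon> x = ln (M * \<epsilon> * (1 + \<epsilon>)) - 2 * ln (x + \<epsilon>)"

context
  fixes \<epsilon> :: real
  assumes \<epsilon>_pos: "0 < \<epsilon>"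
begin

lemma has_real_derivative_concentrating_profile:
  assumes "0 \<le> x"
  shows "(concentrating_profile M \<epsilon> has_real_derivative - 2 / (x + \<epsilon>)) (at x)"
  using assms \<epsilon>_pos unfolding concentrating_profile_def
  by (auto intro!: derivative_eq_intros simp: field_simps)

lemma W12_01_concentrating_profile: "W12_01 (concentrating_profile M \<epsilon>) (\<lambda>x. - 2 / (x + \<epsilon>))"
  using \<epsilon>_pos
  by (intro W12_01_of_C1 has_real_derivative_concentrating_profile continuous_intros) auto

lemma dirichlet_energy_concentrating_profile:
  "(LINT x:{0<..<1}|lborel. (- 2 / (x + \<epsilon>))\<^sup>2) \<le> 4 / \<epsilon>"
proof -
  have "(LINT x:{0<..<1}|lborel. (- 2 / (x + \<epsilon>))\<^sup>2) = (LINT x:{0<..<1}|lborel. 4 / (x + \<epsilon>) ^ 2)"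
    by (simp add: power_divide)
  also have "\<dots> = 4 / \<epsilon> - 4 / (1 + \<epsilon>)"
    using set_integral_inverse_power_shift[of 0 1 \<epsilon> 4 0] \<epsilon>_pos by (simp add: power2_eq_square)
  also have "\<dots> \<le> 4 / \<epsilon>"
    using \<epsilon>_pos by simp
  finally show ?thesis .
qed

context
  fixes M :: real
  assumes M_pos: "0 < M"
begin

lemma exp_concentrating_profile:
  assumes "0 \<le> x"
  shows "exp (concentrating_profile M \<epsilon> x) = M * \<epsilon> * (1 + \<epsilon>) / (x + \<epsilon>) ^ 2"
  using assms M_pos \<epsilon>_pos by (simp add: concentrating_profile_def exp_diff exp_double)

lemma mass_concentrating_profile:
  "(LINT x:{0<..<1}|lborel. exp (concentrating_profile M \<epsilon> x)) = M"
proof -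
  have "(LINT x:{0<..<1}|lborel. exp (concentrating_profile M \<epsilon> x))
          = (LINT x:{0<..<1}|lborel. M * \<epsilon> * (1 + \<epsilon>) / (x + \<epsilon>) ^ 2)"
    by (rule set_lebesgue_integral_cong) (auto simp: exp_concentrating_profile)
  also have "\<dots> = M * \<epsilon> * (1 + \<epsilon>) * (1 / \<epsilon> - 1 / (1 + \<epsilon>))"
    using set_integral_inverse_power_shift[of 0 1 \<epsilon> "M * \<epsilon> * (1 + \<epsilon>)" 0] \<epsilon>_pos
    by (simp add: power2_eq_square)
  also have "\<dots> = M"
    using \<epsilon>_pos by (simp add: divide_simps add_pos_pos)
  finally show ?thesis .
qed

lemma exp_double_concentrating_profile_lower_bound:
  assumes "\<epsilon> \<le> 1"
  shows "M\<^sup>2 / (3 * \<epsilon>) - M\<^sup>2 / 3 \<le> (LINT x:{0<..<1}|lborel. exp (2 * concentrating_profile M \<epsilon> x))"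
proof -
  have "exp (2 * concentrating_profile M \<epsilon> x) = (M * \<epsilon> * (1 + \<epsilon>))\<^sup>2 / (x + \<epsilon>) ^ 4"
    if "0 \<le> x" for x
    by (simp add: exp_double exp_concentrating_profile[OF that] power_divide flip: power_mult)
  then have "(LINT x:{0<..<1}|lborel. exp (2 * concentrating_profile M \<epsilon> x))
          = (LINT x:{0<..<1}|lborel. (M * \<epsilon> * (1 + \<epsilon>))\<^sup>2 / (x + \<epsilon>) ^ 4)"
    by (intro set_lebesgue_integral_cong) auto
  also have "\<dots> = (M * \<epsilon> * (1 + \<epsilon>))\<^sup>2 / 3 * (1 / \<epsilon> ^ 3 - 1 / (1 + \<epsilon>) ^ 3)"
    using set_integral_inverse_power_shift[of 0 1 \<epsilon> "(M * \<epsilon> * (1 + \<epsilon>))\<^sup>2" 2] \<epsilon>_pos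
    by simp
  also have "\<dots> = M\<^sup>2 * (1 + \<epsilon>)\<^sup>2 / (3 * \<epsilon>) - M\<^sup>2 * \<epsilon>\<^sup>2 / (3 * (1 + \<epsilon>))"
    using \<epsilon>_pos by (simp add: divide_simps add_pos_pos) algebra
  finally have exact: "(LINT x:{0<..<1}|lborel. exp (2 * concentrating_profile M \<epsilon> x))
      = M\<^sup>2 * (1 + \<epsilon>)\<^sup>2 / (3 * \<epsilon>) - M\<^sup>2 * \<epsilon>\<^sup>2 / (3 * (1 + \<epsilon>))" .
  have "M\<^sup>2 * 1 \<le> M\<^sup>2 * (1 + \<epsilon>)\<^sup>2"
    using \<epsilon>_pos by (intro mult_left_mono one_le_power) auto
  then have "M\<^sup>2 / (3 * \<epsilon>) \<le> M\<^sup>2 * (1 + \<epsilon>)\<^sup>2 / (3 * \<epsilon>)"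
    using \<epsilon>_pos by (intro divide_right_mono) auto
  moreover have "M\<^sup>2 * \<epsilon>\<^sup>2 / (3 * (1 + \<epsilon>)) \<le> M\<^sup>2 / 3"
  proof -
    have "\<epsilon>\<^sup>2 \<le> 1"
      using \<epsilon>_pos assms by (simp add: power_le_one)
    then have "\<epsilon>\<^sup>2 \<le> 1 + \<epsilon>"
      using \<epsilon>_pos by linarith
    then have "M\<^sup>2 * \<epsilon>\<^sup>2 \<le> M\<^sup>2 * (1 + \<epsilon>)"
      by (intro mult_left_mono) auto
    then show ?thesis
      using \<epsilon>_pos by (simp add: field_simps)
  qed
  ultimately show ?thesis
    using exact by linarith
qed

end

end

theorem lemma4:
  fixes M :: real
  assumes "M > 0"
  shows "\<exists>\<delta>0>0. \<forall>\<delta>. 0 < \<delta> \<and> \<delta> < \<delta>0 \<longrightarrow>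
           (\<forall>h :: real \<Rightarrow> real. continuous_on {0..} h \<longrightarrow>
              \<not> (\<forall>m g. W12_01 m g \<and> (LINT x:{0<..<1}|lborel. exp (m x)) = M \<longrightarrow>
                    (LINT x:{0<..<1}|lborel. exp (2 * m x))
                      < \<delta> * M\<^sup>2 * (LINT x:{0<..<1}|lborel. (g x)\<^sup>2)
                        + h (LINT x:{0<..<1}|lborel. exp (m x))))"
proof (intro exI[of _ "1/24"] conjI allI impI notI)
  fix \<delta> :: real and h :: "real \<Rightarrow> real"
  assume \<delta>: "0 < \<delta> \<and> \<delta> < 1/24"
  assume bound: "\<forall>m g. W12_01 m g \<and> (LINT x:{0<..<1}|lborel. exp (m x)) = M \<longrightarrow>
                    (LINT x:{0<..<1}|lborel. exp (2 * m x))
                      < \<delta> * M\<^sup>2 * (LINT x:{0<..<1}|lborel. (g x)\<^sup>2)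
                        + h (LINT x:{0<..<1}|lborel. exp (m x))"
  define K where "K = M\<^sup>2 + \<bar>h M\<bar>"
  define \<epsilon> where "\<epsilon> = M\<^sup>2 / (6 * K)"
  have "0 < M\<^sup>2" and "M\<^sup>2 \<le> K" and "0 < K"
    using \<open>M > 0\<close> by (auto simp: K_def add_pos_nonneg)
  then have \<epsilon>_pos: "0 < \<epsilon>" and "\<epsilon> \<le> 1"
    and M\<epsilon>: "M\<^sup>2 / (6 * \<epsilon>) = K" "M\<^sup>2 / (3 * \<epsilon>) = 2 * K"
    by (auto simp: \<epsilon>_def field_simps)
  let ?m = "concentrating_profile M \<epsilon>" and ?g = "\<lambda>x. - 2 / (x + \<epsilon>)"
  have "(LINT x:{0<..<1}|lborel. exp (2 * ?m x))
      < \<delta> * M\<^sup>2 * (LINT x:{0<..<1}|lborel. (?g x)\<^sup>2) + h M"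
    using bound[rule_format, OF conjI[OF W12_01_concentrating_profile[OF \<epsilon>_pos]
        mass_concentrating_profile[OF \<epsilon>_pos \<open>M > 0\<close>]]]
      mass_concentrating_profile[OF \<epsilon>_pos \<open>M > 0\<close>] by simp
  then have "M\<^sup>2 / (3 * \<epsilon>) - M\<^sup>2 / 3 < \<delta> * M\<^sup>2 * (LINT x:{0<..<1}|lborel. (?g x)\<^sup>2) + h M"
    using exp_double_concentrating_profile_lower_bound[OF \<epsilon>_pos \<open>M > 0\<close> \<open>\<epsilon> \<le> 1\<close>] by linarith
  also have "\<dots> \<le> \<delta> * M\<^sup>2 * (4 / \<epsilon>) + h M"
    using \<delta> by (intro add_right_mono mult_left_mono dirichlet_energy_concentrating_profile \<epsilon>_pos) auto
  also have "\<dots> \<le> M\<^sup>2 / (6 * \<epsilon>) + h M"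
    using \<delta> \<epsilon>_pos \<open>M > 0\<close> by (simp add: field_simps)
  finally show False
    using M\<epsilon> \<open>0 < M\<^sup>2\<close> abs_ge_self[of "h M"] K_def by linarith
qed simp

end
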